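(* Let $H$ be a group and $X=\{x_1,\dots,x_n\}$ a finite set of elements of $H$. Let $H\trianglerighteq N_1\trianglerighteq N_2\trianglerighteq\cdots$ be a central series of $H$ such that $[H,N_i]=N_{i+1}$ for all $i\ge1$. Suppose that for every $i\ge1$ the quotient $H/N_i$ is normally generated by $\{x_1N_i,\dots,x_nN_i\}$. Let $\Gamma=\varprojlim_i H/N_i$ and let $h:H\to\Gamma$ be the natural map. Then $\Gamma$ is normally generated by $\{h(x_1),\dots,h(x_n)\}$.
   Context: A group is normally generated by a subset if the smallest normal subgroup containing that subset is the whole group. *)

theory Defs
  imports "HOL-Algebra.Algebra"
begin

definition normal_closure :: "('a, 'b) monoid_scheme \<Rightarrow> 'a set \<Rightarrow> 'a set" where
  "normal_closure G S = \<Inter> {N. N \<lhd> G \<and> S \<subseteq> N}"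

definition normally_generated_by :: "('a, 'b) monoid_scheme \<Rightarrow> 'a set \<Rightarrow> bool" where
  "normally_generated_by G S \<longleftrightarrow> S \<subseteq> carrier G \<and> normal_closure G S = carrier G"

definition commutator_subgroup :: "('a, 'b) monoid_scheme \<Rightarrow> 'a set \<Rightarrow> 'a set \<Rightarrow> 'a set" where
  "commutator_subgroup G A B =
     generate G (\<Union>a\<in>A. \<Union>b\<in>B. {a \<otimes>\<^bsub>G\<^esub> b \<otimes>\<^bsub>G\<^esub> inv\<^bsub>G\<^esub> a \<otimes>\<^bsub>G\<^esub> inv\<^bsub>G\<^esub> b})"

text \<open>Inverse limit of the quotients H / N i (i = 0,1,2,...; index 0 corresponds to N_1):
  compatible sequences of cosets, with componentwise multiplication.\<close>
definition inv_limit_quot :: "('a, 'b) monoid_scheme \<Rightarrow> (nat \<Rightarrow> 'a set) \<Rightarrow> (nat \<Rightarrow> 'a set) monoid" where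
  "inv_limit_quot H N =
    \<lparr> carrier = {f. (\<forall>i. f i \<in> carrier (H Mod N i)) \<and> (\<forall>i. f (Suc i) \<subseteq> f i)},
      monoid.mult = (\<lambda>f g i. f i <#>\<^bsub>H\<^esub> g i),
      monoid.one = N \<rparr>"

definition inv_limit_map :: "('a, 'b) monoid_scheme \<Rightarrow> (nat \<Rightarrow> 'a set) \<Rightarrow> 'a \<Rightarrow> (nat \<Rightarrow> 'a set)" where
  "inv_limit_map H N x = (\<lambda>i. N i #>\<^bsub>H\<^esub> x)"

end

theory Submission
  imports Defs
begin

text \<open>
  Let \<open>K\<close> be a normal subgroup of \<open>\<Gamma>\<close> containing the images of the \<open>x\<^sub>i\<close>. Its preimage
  in \<open>H\<close> is a normal subgroup containing the \<open>x\<^sub>i\<close>, so it maps onto \<open>H/N\<^sub>2\<close>, and every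
  \<open>\<gamma> \<in> \<Gamma>\<close> is an element of \<open>K\<close> times some \<open>\<delta>\<close> that is trivial in \<open>H/N\<^sub>2\<close>.

  As \<open>[H,N\<^bsub>k\<^esub>] = N\<^bsub>k+1\<^esub>\<close> and \<open>[H,N\<^bsub>k+1\<^esub>] = N\<^bsub>k+2\<^esub>\<close>, the commutators \<open>[g,n]\<close> with
  \<open>n \<in> N\<^bsub>k\<^esub>\<close> are central modulo \<open>N\<^bsub>k+2\<^esub>\<close>. Hence the elements \<open>g\<close> all of whose
  commutators with \<open>N\<^bsub>k\<^esub>\<close> are congruent modulo \<open>N\<^bsub>k+2\<^esub>\<close> to a product
  \<open>\<Prod>\<^sub>i [x\<^sub>i, b\<^sub>i]\<close> with \<open>b\<^sub>i \<in> N\<^bsub>k\<^esub>\<close> form a normal subgroup; it contains the \<open>x\<^sub>i\<close> and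
  \<open>N\<^bsub>k+1\<^esub>\<close>, so it is all of \<open>H\<close>, because \<open>H/N\<^bsub>k+1\<^esub>\<close> is normally generated by the
  \<open>x\<^sub>i\<close>. Thus every element of \<open>N\<^bsub>k+1\<^esub>\<close> has this form modulo \<open>N\<^bsub>k+2\<^esub>\<close>, and
  correcting one level at a time writes \<open>\<delta> \<equiv> \<Prod>\<^sub>i [x\<^sub>i, a\<^bsub>i,k\<^esub>]\<close> modulo every
  \<open>N\<^bsub>k+1\<^esub>\<close>, with \<open>a\<^bsub>i,k+1\<^esub> \<equiv> a\<^bsub>i,k\<^esub>\<close> modulo \<open>N\<^bsub>k\<^esub>\<close>. These coherent sequences are
  elements \<open>c\<^sub>i \<in> \<Gamma>\<close> with \<open>\<delta> = \<Prod>\<^sub>i [h(x\<^sub>i), c\<^sub>i]\<close>, which lies in \<open>K\<close>.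
\<close>

definition commutator :: "('a, 'b) monoid_scheme \<Rightarrow> 'a \<Rightarrow> 'a \<Rightarrow> 'a" where
  "commutator G x y = x \<otimes>\<^bsub>G\<^esub> y \<otimes>\<^bsub>G\<^esub> inv\<^bsub>G\<^esub> x \<otimes>\<^bsub>G\<^esub> inv\<^bsub>G\<^esub> y"

fun commutator_prod :: "('a, 'b) monoid_scheme \<Rightarrow> ('c \<Rightarrow> 'a) \<Rightarrow> ('c \<Rightarrow> 'a) \<Rightarrow> 'c list \<Rightarrow> 'a" where
  "commutator_prod G u v [] = \<one>\<^bsub>G\<^esub>"
| "commutator_prod G u v (x # xs) = commutator G (u x) (v x) \<otimes>\<^bsub>G\<^esub> commutator_prod G u v xs"

definition central :: "('a, 'b) monoid_scheme \<Rightarrow> 'a \<Rightarrow> bool" where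
  "central G z \<longleftrightarrow> z \<in> carrier G \<and> (\<forall>g\<in>carrier G. z \<otimes>\<^bsub>G\<^esub> g = g \<otimes>\<^bsub>G\<^esub> z)"

lemma commutator_prod_cong:
  "(\<And>x. x \<in> set xs \<Longrightarrow> u x = u' x) \<Longrightarrow> (\<And>x. x \<in> set xs \<Longrightarrow> v x = v' x) \<Longrightarrow>
    commutator_prod G u v xs = commutator_prod G u' v' xs"
  by (induction xs) auto

context group
begin

lemma m_inv_cancel_left [simp]: "x \<in> carrier G \<Longrightarrow> y \<in> carrier G \<Longrightarrow> x \<otimes> (inv x \<otimes> y) = y"
  by (simp add: m_assoc [symmetric])

lemma inv_m_cancel_left [simp]: "x \<in> carrier G \<Longrightarrow> y \<in> carrier G \<Longrightarrow> inv x \<otimes> (x \<otimes> y) = y"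
  by (simp add: m_assoc [symmetric])

lemma commutator_closed [simp]:
  "x \<in> carrier G \<Longrightarrow> y \<in> carrier G \<Longrightarrow> commutator G x y \<in> carrier G"
  by (simp add: commutator_def)

lemma commutator_prod_closed [simp]:
  "(\<And>x. x \<in> set xs \<Longrightarrow> u x \<in> carrier G \<and> v x \<in> carrier G) \<Longrightarrow> commutator_prod G u v xs \<in> carrier G"
  by (induction xs) auto

lemma commutator_one_left [simp]: "x \<in> carrier G \<Longrightarrow> commutator G \<one> x = \<one>"
  by (simp add: commutator_def)

lemma commutator_one_right [simp]: "x \<in> carrier G \<Longrightarrow> commutator G x \<one> = \<one>"
  by (simp add: commutator_def)

lemma inv_commutator:
  "x \<in> carrier G \<Longrightarrow> y \<in> carrier G \<Longrightarrow> inv (commutator G x y) = commutator G y x"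
  by (simp add: commutator_def inv_mult_group m_assoc)

lemma commutator_eq_one_iff:
  assumes "x \<in> carrier G" "y \<in> carrier G"
  shows "commutator G x y = \<one> \<longleftrightarrow> x \<otimes> y = y \<otimes> x"
proof -
  have "commutator G x y = \<one> \<longleftrightarrow> x \<otimes> y \<otimes> inv x = y"
    using assms inv_solve_right'[of "\<one>" "x \<otimes> y \<otimes> inv x" y] by (simp add: commutator_def)
  also have "\<dots> \<longleftrightarrow> x \<otimes> y = y \<otimes> x"
    using assms inv_solve_right'[of y "x \<otimes> y" x] by simp
  finally show ?thesis .
qed

lemma commutator_mult_left:
  "\<lbrakk>u \<in> carrier G; u' \<in> carrier G; v \<in> carrier G\<rbrakk> \<Longrightarrow>
    commutator G (u \<otimes> u') v = u \<otimes> commutator G u' v \<otimes> inv u \<otimes> commutator G u v"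
  by (simp add: commutator_def m_assoc inv_mult_group)

lemma commutator_mult_right:
  "\<lbrakk>u \<in> carrier G; v \<in> carrier G; v' \<in> carrier G\<rbrakk> \<Longrightarrow>
    commutator G u (v \<otimes> v') = commutator G u v \<otimes> (v \<otimes> commutator G u v' \<otimes> inv v)"
  by (simp add: commutator_def m_assoc inv_mult_group)

lemma commutator_conj_left:
  "\<lbrakk>g \<in> carrier G; u \<in> carrier G; v \<in> carrier G\<rbrakk> \<Longrightarrow>
    commutator G (g \<otimes> u \<otimes> inv g) v = g \<otimes> commutator G u (inv g \<otimes> v \<otimes> g) \<otimes> inv g"
  by (simp add: commutator_def m_assoc inv_mult_group)

lemma central_closed: "central G z \<Longrightarrow> z \<in> carrier G"
  by (simp add: central_def)

lemma central_commute: "central G z \<Longrightarrow> g \<in> carrier G \<Longrightarrow> z \<otimes> g = g \<otimes> z"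
  by (simp add: central_def)

lemma central_conj: "central G z \<Longrightarrow> g \<in> carrier G \<Longrightarrow> g \<otimes> z \<otimes> inv g = z"
  by (simp add: central_def m_assoc)

lemma commutator_prod_mult_right:
  assumes "\<And>x. x \<in> set xs \<Longrightarrow> u x \<in> carrier G \<and> v x \<in> carrier G \<and> v' x \<in> carrier G"
    and "\<And>x. x \<in> set xs \<Longrightarrow> central G (commutator G (u x) (v' x))"
  shows "commutator_prod G u (\<lambda>x. v x \<otimes> v' x) xs = commutator_prod G u v xs \<otimes> commutator_prod G u v' xs"
  using assms
proof (induction xs)
  case (Cons y ys)
  let ?c = "commutator G (u y) (v y)" and ?c' = "commutator G (u y) (v' y)"
  let ?p = "commutator_prod G u v ys" and ?p' = "commutator_prod G u v' ys"
  have y: "u y \<in> carrier G" "v y \<in> carrier G" "v' y \<in> carrier G" and c': "central G ?c'"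
    using Cons.prems by auto
  have c: "?c \<in> carrier G" "?c' \<in> carrier G" and p: "?p \<in> carrier G" "?p' \<in> carrier G"
    using Cons.prems by auto
  have IH: "commutator_prod G u (\<lambda>x. v x \<otimes> v' x) ys = ?p \<otimes> ?p'"
    by (rule Cons.IH) (use Cons.prems in auto)
  have "commutator G (u y) (v y \<otimes> v' y) = ?c \<otimes> (v y \<otimes> ?c' \<otimes> inv (v y))"
    using y by (rule commutator_mult_right)
  also have "v y \<otimes> ?c' \<otimes> inv (v y) = ?c'"
    using c' y(2) by (rule central_conj)
  finally have "commutator_prod G u (\<lambda>x. v x \<otimes> v' x) (y # ys) = ?c \<otimes> ?c' \<otimes> (?p \<otimes> ?p')"
    using IH by simp
  also have "\<dots> = ?c \<otimes> (?c' \<otimes> ?p) \<otimes> ?p'"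
    using c p by (simp add: m_assoc)
  also have "?c' \<otimes> ?p = ?p \<otimes> ?c'"
    using c' p(1) by (rule central_commute)
  finally show ?case
    using c p by (simp add: m_assoc)
qed simp

lemma commutator_prod_one_right:
  "(\<And>x. x \<in> set xs \<Longrightarrow> u x \<in> carrier G) \<Longrightarrow> commutator_prod G u (\<lambda>x. \<one>) xs = \<one>"
  by (induction xs) (auto simp: commutator_def)

lemma commutator_prod_single:
  assumes "distinct xs" "y \<in> set xs" "\<And>x. x \<in> set xs \<Longrightarrow> u x \<in> carrier G" "v \<in> carrier G"
  shows "commutator_prod G u (\<lambda>x. if x = y then v else \<one>) xs = commutator G (u y) v"
  using assms
proof (induction xs)
  case (Cons z zs)
  show ?case
  proof (cases "z = y")
    case True
    with Cons.prems have "commutator_prod G u (\<lambda>x. if x = y then v else \<one>) zs = commutator_prod G u (\<lambda>x. \<one>) zs"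
      by (intro commutator_prod_cong) auto
    with True Cons.prems show ?thesis
      by (simp add: commutator_prod_one_right)
  qed (use Cons in auto)
qed simp

lemma commutator_prod_in_normal:
  assumes "K \<lhd> G" "\<And>x. x \<in> set xs \<Longrightarrow> u x \<in> K \<and> v x \<in> carrier G"
  shows "commutator_prod G u v xs \<in> K"
  using assms(2)
proof (induction xs)
  case Nil
  show ?case
    using assms(1) by (simp add: normal_def subgroup.one_closed)
next
  case (Cons y ys)
  interpret K: normal K G by (rule assms(1))
  have uv: "u y \<in> K" "v y \<in> carrier G"
    using Cons.prems by auto
  then have "v y \<otimes> inv (u y) \<otimes> inv (v y) \<in> K"
    by (simp add: K.inv_op_closed2)
  then have "u y \<otimes> (v y \<otimes> inv (u y) \<otimes> inv (v y)) \<in> K"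
    by (rule K.m_closed [OF uv(1)])
  then have "commutator G (u y) (v y) \<in> K"
    using uv by (simp add: commutator_def m_assoc)
  then show ?case
    using Cons by (simp add: K.m_closed)
qed

end

lemma (in group_hom) hom_commutator:
  "x \<in> carrier G \<Longrightarrow> y \<in> carrier G \<Longrightarrow> h (commutator G x y) = commutator H (h x) (h y)"
  by (simp add: commutator_def)

lemma (in group_hom) hom_commutator_prod:
  "(\<And>x. x \<in> set xs \<Longrightarrow> u x \<in> carrier G \<and> v x \<in> carrier G) \<Longrightarrow>
    h (commutator_prod G u v xs) = commutator_prod H (\<lambda>x. h (u x)) (\<lambda>x. h (v x)) xs"
  by (induction xs) (auto simp: hom_commutator)

lemma commutator_in_subgroup:
  "g \<in> carrier G \<Longrightarrow> n \<in> N \<Longrightarrow> commutator G g n \<in> commutator_subgroup G (carrier G) N"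
  unfolding commutator_subgroup_def commutator_def by (rule generate.incl) blast

lemma (in normal) r_coset_eq_iff:
  assumes "x \<in> carrier G" "y \<in> carrier G"
  shows "H #> x = H #> y \<longleftrightarrow> x \<otimes> inv y \<in> H"
proof
  assume "H #> x = H #> y"
  then have "x \<in> H #> y"
    using assms(1) rcos_self subgroup_axioms by blast
  then show "x \<otimes> inv y \<in> H"
    using assms(2) is_group rcos_module_imp by blast
next
  assume "x \<otimes> inv y \<in> H"
  then have "x \<in> H #> y"
    using assms is_group rcos_module_rev by blast
  then show "H #> x = H #> y"
    using assms(2) repr_independence subgroup_axioms by metis
qed

lemma (in normal) r_coset_eq_self_iff: "x \<in> carrier G \<Longrightarrow> H #> x = H \<longleftrightarrow> x \<in> H"
  using coset_join1 coset_join2 subgroup_axioms by blast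

lemma (in normal) r_coset_of_mem:
  assumes "A \<in> carrier (G Mod H)" "x \<in> A"
  shows "H #> x = A"
proof -
  obtain g where "g \<in> carrier G" "A = H #> g"
    using assms(1) by (auto simp: carrier_FactGroup)
  then show ?thesis
    using assms(2) repr_independence subgroup_axioms by metis
qed

lemma (in normal) group_hom_r_coset: "group_hom G (G Mod H) (\<lambda>x. H #> x)"
  by (simp add: group_hom_axioms_def group_hom_def factorgroup_is_group is_group r_coset_hom_Mod)

lemma (in group_hom) normal_vimage:
  assumes "K \<lhd> H"
  shows "{x \<in> carrier G. h x \<in> K} \<lhd> G"
proof -
  interpret K: normal K H by (rule assms)
  show ?thesis
    by (intro G.normal_invI G.subgroupI) (auto intro: K.m_closed K.m_inv_closed K.inv_op_closed2)
qed

lemma normally_generated_by_subset: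
  "normally_generated_by G S \<Longrightarrow> K \<lhd> G \<Longrightarrow> S \<subseteq> K \<Longrightarrow> carrier G \<subseteq> K"
  unfolding normally_generated_by_def normal_closure_def by blast

lemma (in group) normally_generated_byI:
  "S \<subseteq> carrier G \<Longrightarrow> (\<And>K. K \<lhd> G \<Longrightarrow> S \<subseteq> K \<Longrightarrow> carrier G \<subseteq> K) \<Longrightarrow> normally_generated_by G S"
  unfolding normally_generated_by_def normal_closure_def using normal_self by blast

lemma (in normal) normally_generated_FactGroup_image:
  assumes "normally_generated_by (G Mod H) ((\<lambda>x. H #> x) ` S)" "T \<lhd> G" "S \<subseteq> T"
  shows "(\<lambda>x. H #> x) ` T = carrier (G Mod H)"
proof
  show "(\<lambda>x. H #> x) ` T \<subseteq> carrier (G Mod H)"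
    using assms(2) normal_imp_subgroup subgroup.subset by (fastforce simp: carrier_FactGroup)
  have "(\<lambda>x. H #> x) ` T \<lhd> G Mod H"
    using normal.surj_hom_normal_subgroup [OF assms(2) group_hom_r_coset] by (simp add: carrier_FactGroup)
  then show "carrier (G Mod H) \<subseteq> (\<lambda>x. H #> x) ` T"
    using normally_generated_by_subset [OF assms(1)] assms(3) by blast
qed

section \<open>Lifting one level of a central series\<close>

locale commutator_lifting = group H for H :: "('a, 'b) monoid_scheme" (structure) +
  fixes K M L :: "'a set" and xs :: "'a list"
  assumes K_normal: "K \<lhd> H" and M_normal: "M \<lhd> H" and L_normal: "L \<lhd> H"
    and commutators_K: "commutator_subgroup H (carrier H) K = M"
    and commutators_M: "commutator_subgroup H (carrier H) M \<subseteq> L"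
    and xs_carrier: "set xs \<subseteq> carrier H"
    and xs_distinct: "distinct xs"
    and normally_generated_mod_M: "normally_generated_by (H Mod M) ((\<lambda>x. M #> x) ` set xs)"
begin

sublocale K: normal K H by (rule K_normal)
sublocale M: normal M H by (rule M_normal)
sublocale L: normal L H by (rule L_normal)
sublocale quot: group_hom H "H Mod L" "\<lambda>g. L #> g" by (rule L.group_hom_r_coset)

lemma central_coset_M: "m \<in> M \<Longrightarrow> central (H Mod L) (L #> m)"
proof -
  assume m: "m \<in> M"
  have "(L #> m) \<otimes>\<^bsub>H Mod L\<^esub> (L #> g) = (L #> g) \<otimes>\<^bsub>H Mod L\<^esub> (L #> m)" if g: "g \<in> carrier H" for g
  proof -
    have "commutator H g m \<in> L"
      using commutator_in_subgroup [OF g m] commutators_M by blast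
    then have "commutator (H Mod L) (L #> g) (L #> m) = \<one>\<^bsub>H Mod L\<^esub>"
      using g m by (simp add: quot.hom_commutator [symmetric] L.r_coset_eq_self_iff)
    then show ?thesis
      using g m quot.H.commutator_eq_one_iff by (simp del: one_FactGroup mult_FactGroup)
  qed
  then show ?thesis
    using m by (auto simp: central_def carrier_FactGroup)
qed

lemma central_coset_commutator:
  "g \<in> carrier H \<Longrightarrow> n \<in> K \<Longrightarrow> central (H Mod L) (L #> commutator H g n)"
  using central_coset_M commutator_in_subgroup [of g H n K] commutators_K by simp

lemma coset_commutator_prod_mult:
  assumes "\<And>x. a x \<in> carrier H" "\<And>x. b x \<in> K"
  shows "L #> commutator_prod H (\<lambda>x. x) (\<lambda>x. a x \<otimes> b x) xs
    = (L #> commutator_prod H (\<lambda>x. x) a xs) \<otimes>\<^bsub>H Mod L\<^esub> (L #> commutator_prod H (\<lambda>x. x) b xs)"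
proof -
  have x: "\<And>x. x \<in> set xs \<Longrightarrow> x \<in> carrier H"
    using xs_carrier by blast
  have "L #> commutator_prod H (\<lambda>x. x) (\<lambda>x. a x \<otimes> b x) xs
      = commutator_prod (H Mod L) (\<lambda>x. L #> x) (\<lambda>x. (L #> a x) \<otimes>\<^bsub>H Mod L\<^esub> (L #> b x)) xs"
    using assms x by (simp add: quot.hom_commutator_prod)
  also have "\<dots> = commutator_prod (H Mod L) (\<lambda>x. L #> x) (\<lambda>x. L #> a x) xs
      \<otimes>\<^bsub>H Mod L\<^esub> commutator_prod (H Mod L) (\<lambda>x. L #> x) (\<lambda>x. L #> b x) xs"
    using assms x by (intro quot.H.commutator_prod_mult_right)
      (auto simp: quot.hom_commutator [symmetric] central_coset_commutator)
  finally show ?thesis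
    using assms x by (simp add: quot.hom_commutator_prod)
qed

definition word_cosets :: "'a set set" where
  "word_cosets = {L #> commutator_prod H (\<lambda>x. x) b xs | b. \<forall>x. b x \<in> K}"

lemma commutator_prod_xs_closed:
  "(\<And>x. b x \<in> carrier H) \<Longrightarrow> commutator_prod H (\<lambda>x. x) b xs \<in> carrier H"
  using xs_carrier by (intro commutator_prod_closed) blast

lemma word_coset_in_word_cosets:
  "(\<And>x. b x \<in> K) \<Longrightarrow> L #> commutator_prod H (\<lambda>x. x) b xs \<in> word_cosets"
  unfolding word_cosets_def by blast

lemma subgroup_word_cosets: "subgroup word_cosets (H Mod L)"
proof (rule quot.H.subgroupI)
  show "word_cosets \<subseteq> carrier (H Mod L)"
    unfolding word_cosets_def by (blast intro: quot.hom_closed commutator_prod_xs_closed K.mem_carrier)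
  show "word_cosets \<noteq> {}"
    using word_coset_in_word_cosets [of "\<lambda>x. \<one>", OF K.one_closed] by blast
next
  fix w w' assume "w \<in> word_cosets" "w' \<in> word_cosets"
  then obtain b b' where b: "\<And>x. b x \<in> K" "\<And>x. b' x \<in> K"
    and w: "w = L #> commutator_prod H (\<lambda>x. x) b xs" "w' = L #> commutator_prod H (\<lambda>x. x) b' xs"
    unfolding word_cosets_def by blast
  have "w \<otimes>\<^bsub>H Mod L\<^esub> w' = L #> commutator_prod H (\<lambda>x. x) (\<lambda>x. b x \<otimes> b' x) xs"
    unfolding w using b by (intro coset_commutator_prod_mult [symmetric] K.mem_carrier)
  then show "w \<otimes>\<^bsub>H Mod L\<^esub> w' \<in> word_cosets"
    using b by (simp add: word_coset_in_word_cosets K.m_closed)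
next
  fix w assume "w \<in> word_cosets"
  then obtain b where b: "\<And>x. b x \<in> K" and w: "w = L #> commutator_prod H (\<lambda>x. x) b xs"
    unfolding word_cosets_def by blast
  let ?w' = "L #> commutator_prod H (\<lambda>x. x) (\<lambda>x. inv (b x)) xs"
  have x: "\<And>x. x \<in> set xs \<Longrightarrow> x \<in> carrier H"
    using xs_carrier by blast
  have bc: "\<And>x. b x \<in> carrier H"
    using b by (rule K.mem_carrier)
  have "?w' \<otimes>\<^bsub>H Mod L\<^esub> w = L #> commutator_prod H (\<lambda>x. x) (\<lambda>x. inv (b x) \<otimes> b x) xs"
    unfolding w using b bc by (intro coset_commutator_prod_mult [symmetric] inv_closed)
  also have "commutator_prod H (\<lambda>x. x) (\<lambda>x. inv (b x) \<otimes> b x) xs = \<one>"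
    using x bc by (simp add: commutator_prod_one_right)
  finally have "?w' \<otimes>\<^bsub>H Mod L\<^esub> w = \<one>\<^bsub>H Mod L\<^esub>"
    by simp
  moreover have "w \<in> carrier (H Mod L)" "?w' \<in> carrier (H Mod L)"
    unfolding w using bc by (simp_all add: commutator_prod_xs_closed)
  ultimately have "inv\<^bsub>H Mod L\<^esub> w = ?w'"
    by (rule quot.H.inv_equality)
  then show "inv\<^bsub>H Mod L\<^esub> w \<in> word_cosets"
    using b by (simp add: word_coset_in_word_cosets K.m_inv_closed)
qed

lemma one_in_word_cosets: "L \<in> word_cosets"
  using subgroup.one_closed [OF subgroup_word_cosets] by simp

text \<open>
  \<open>admissible\<close> is a normal subgroup containing \<open>xs\<close> and \<open>M\<close>, hence all of \<open>H\<close>; applied to the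
  generators \<open>[a,b]\<close> of \<open>M\<close> this shows that \<open>M\<close> maps into \<open>word_cosets\<close>.
\<close>

definition admissible :: "'a set" where
  "admissible = {g \<in> carrier H. \<forall>n\<in>K. L #> commutator H g n \<in> word_cosets}"

lemma commutator_coset_hom:
  assumes n: "n \<in> K"
  shows "group_hom H (H Mod L) (\<lambda>g. L #> commutator H g n)"
proof -
  have nc: "n \<in> carrier H"
    using n by (rule K.mem_carrier)
  have "L #> commutator H (g \<otimes> g') n = (L #> commutator H g n) \<otimes>\<^bsub>H Mod L\<^esub> (L #> commutator H g' n)"
    if g: "g \<in> carrier H" "g' \<in> carrier H" for g g'
  proof -
    let ?c = "L #> commutator H g n" and ?c' = "L #> commutator H g' n"
    have "L #> commutator H (g \<otimes> g') n = (L #> g) \<otimes>\<^bsub>H Mod L\<^esub> ?c' \<otimes>\<^bsub>H Mod L\<^esub> inv\<^bsub>H Mod L\<^esub> (L #> g) \<otimes>\<^bsub>H Mod L\<^esub> ?c"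
      using g nc by (simp add: commutator_mult_left del: mult_FactGroup)
    also have "(L #> g) \<otimes>\<^bsub>H Mod L\<^esub> ?c' \<otimes>\<^bsub>H Mod L\<^esub> inv\<^bsub>H Mod L\<^esub> (L #> g) = ?c'"
      using g n by (intro quot.H.central_conj central_coset_commutator quot.hom_closed)
    also have "?c' \<otimes>\<^bsub>H Mod L\<^esub> ?c = ?c \<otimes>\<^bsub>H Mod L\<^esub> ?c'"
      using g n nc by (intro quot.H.central_commute central_coset_commutator quot.hom_closed commutator_closed)
    finally show ?thesis .
  qed
  then show ?thesis
    using nc by (auto simp: group_hom_def group_hom_axioms_def hom_def quot.is_group
        simp del: mult_FactGroup intro: quot.hom_closed)
qed

lemma admissible_normal: "admissible \<lhd> H"
proof (rule normal_invI)
  show "subgroup admissible H"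
  proof (rule subgroupI)
    show "admissible \<subseteq> carrier H"
      by (auto simp: admissible_def)
    have "\<one> \<in> admissible"
      by (auto simp: admissible_def K.mem_carrier one_in_word_cosets)
    then show "admissible \<noteq> {}"
      by blast
  next
    fix a b assume "a \<in> admissible" "b \<in> admissible"
    moreover have "L #> commutator H (a \<otimes> b) n \<in> word_cosets"
      if "a \<in> admissible" "b \<in> admissible" "n \<in> K" for n
    proof -
      interpret \<phi>: group_hom H "H Mod L" "\<lambda>g. L #> commutator H g n"
        using \<open>n \<in> K\<close> by (rule commutator_coset_hom)
      show ?thesis
        using that subgroup.m_closed [OF subgroup_word_cosets] by (auto simp: admissible_def simp del: mult_FactGroup)
    qed
    ultimately show "a \<otimes> b \<in> admissible"
      by (auto simp: admissible_def)
  next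
    fix a assume "a \<in> admissible"
    moreover have "L #> commutator H (inv a) n \<in> word_cosets"
      if "a \<in> admissible" "n \<in> K" for n
    proof -
      interpret \<phi>: group_hom H "H Mod L" "\<lambda>g. L #> commutator H g n"
        using \<open>n \<in> K\<close> by (rule commutator_coset_hom)
      show ?thesis
        using that subgroup.m_inv_closed [OF subgroup_word_cosets] by (auto simp: admissible_def)
    qed
    ultimately show "inv a \<in> admissible"
      by (auto simp: admissible_def)
  qed
next
  fix g t assume g: "g \<in> carrier H" and t: "t \<in> admissible"
  have tc: "t \<in> carrier H"
    using t by (simp add: admissible_def)
  have "L #> commutator H (g \<otimes> t \<otimes> inv g) n \<in> word_cosets" if n: "n \<in> K" for n
  proof -
    let ?n' = "inv g \<otimes> n \<otimes> g"
    have n': "?n' \<in> K"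
      using g n by (rule K.inv_op_closed1)
    have "L #> commutator H (g \<otimes> t \<otimes> inv g) n
        = (L #> g) \<otimes>\<^bsub>H Mod L\<^esub> (L #> commutator H t ?n') \<otimes>\<^bsub>H Mod L\<^esub> inv\<^bsub>H Mod L\<^esub> (L #> g)"
      using g tc n K.mem_carrier by (simp add: commutator_conj_left del: mult_FactGroup)
    also have "\<dots> = L #> commutator H t ?n'"
      using g tc n' by (intro quot.H.central_conj central_coset_commutator quot.hom_closed)
    finally show ?thesis
      using t n' by (simp add: admissible_def)
  qed
  then show "g \<otimes> t \<otimes> inv g \<in> admissible"
    using g tc by (simp add: admissible_def)
qed

lemma xs_admissible: "set xs \<subseteq> admissible"
proof
  fix x assume x: "x \<in> set xs"
  have "L #> commutator H x n \<in> word_cosets" if n: "n \<in> K" for n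
  proof -
    have "commutator_prod H (\<lambda>x. x) (\<lambda>y. if y = x then n else \<one>) xs = commutator H x n"
      using xs_distinct x xs_carrier K.mem_carrier [OF n] by (intro commutator_prod_single) auto
    then show ?thesis
      using word_coset_in_word_cosets [of "\<lambda>y. if y = x then n else \<one>"] n by simp
  qed
  then show "x \<in> admissible"
    using x xs_carrier by (auto simp: admissible_def)
qed

lemma M_admissible: "M \<subseteq> admissible"
proof
  fix m assume m: "m \<in> M"
  have "L #> commutator H m n = L" if n: "n \<in> K" for n
  proof -
    have "commutator H n m \<in> L"
      using commutator_in_subgroup [OF K.mem_carrier [OF n] m] commutators_M by blast
    then have "inv (commutator H n m) \<in> L"
      by (rule L.m_inv_closed)
    then show ?thesis
      using m n by (simp add: inv_commutator K.mem_carrier M.mem_carrier L.r_coset_eq_self_iff)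
  qed
  then show "m \<in> admissible"
    using m by (simp add: admissible_def M.mem_carrier one_in_word_cosets)
qed

lemma admissible_eq_carrier: "admissible = carrier H"
proof
  interpret A: normal admissible H
    by (rule admissible_normal)
  show "admissible \<subseteq> carrier H"
    by (rule A.subset)
  show "carrier H \<subseteq> admissible"
  proof
    fix g assume g: "g \<in> carrier H"
    have "(\<lambda>x. M #> x) ` admissible = carrier (H Mod M)"
      using normally_generated_mod_M admissible_normal xs_admissible
      by (rule M.normally_generated_FactGroup_image)
    moreover have "M #> g \<in> carrier (H Mod M)"
      using g by (simp add: carrier_FactGroup)
    ultimately obtain t where t: "t \<in> admissible" "M #> g = M #> t"
      by (metis imageE)
    have "g \<otimes> inv t \<in> M"
      using t(2) M.r_coset_eq_iff [OF g A.mem_carrier [OF t(1)]] by simp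
    then have "g \<otimes> inv t \<otimes> t \<in> admissible"
      using M_admissible t(1) by (blast intro: A.m_closed)
    then show "g \<in> admissible"
      using g A.mem_carrier [OF t(1)] by (simp add: m_assoc)
  qed
qed

lemma coset_in_word_cosets: "m \<in> M \<Longrightarrow> L #> m \<in> word_cosets"
proof -
  assume "m \<in> M"
  then have "m \<in> generate H (\<Union>a\<in>carrier H. \<Union>b\<in>K. {a \<otimes> b \<otimes> inv a \<otimes> inv b})"
    using commutators_K by (simp add: commutator_subgroup_def)
  then have "m \<in> carrier H \<and> L #> m \<in> word_cosets"
  proof (induction rule: generate.induct)
    case one
    show ?case
      by (simp add: one_in_word_cosets)
  next
    case (incl c)
    then show ?case
      using admissible_eq_carrier by (auto simp: admissible_def commutator_def K.mem_carrier)
  next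
    case (inv c)
    then have "L #> c \<in> word_cosets" and "c \<in> carrier H"
      using admissible_eq_carrier by (auto simp: admissible_def commutator_def K.mem_carrier)
    then show ?case
      using subgroup.m_inv_closed [OF subgroup_word_cosets] by simp
  next
    case (eng c c')
    then show ?case
      using subgroup.m_closed [OF subgroup_word_cosets] by simp
  qed
  then show ?thesis ..
qed

lemma coset_eq_word_coset:
  "m \<in> M \<Longrightarrow> \<exists>b. (\<forall>x. b x \<in> K) \<and> L #> m = L #> commutator_prod H (\<lambda>x. x) b xs"
  using coset_in_word_cosets unfolding word_cosets_def by blast

end

section \<open>The inverse limit of the quotients\<close>

lemma carrier_inv_limit_quot:
  "f \<in> carrier (inv_limit_quot H N) \<longleftrightarrow> (\<forall>i. f i \<in> carrier (H Mod N i)) \<and> (\<forall>i. f (Suc i) \<subseteq> f i)"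
  by (simp add: inv_limit_quot_def)

lemma mult_inv_limit_quot:
  "f \<otimes>\<^bsub>inv_limit_quot H N\<^esub> g = (\<lambda>i. f i \<otimes>\<^bsub>H Mod N i\<^esub> g i)"
  by (simp add: inv_limit_quot_def)

lemma one_inv_limit_quot: "\<one>\<^bsub>inv_limit_quot H N\<^esub> = (\<lambda>i. \<one>\<^bsub>H Mod N i\<^esub>)"
  by (simp add: inv_limit_quot_def)

lemma inv_limit_map_apply [simp]: "inv_limit_map H N x i = N i #>\<^bsub>H\<^esub> x"
  by (simp add: inv_limit_map_def)

lemma set_mult_mono: "A \<subseteq> A' \<Longrightarrow> B \<subseteq> B' \<Longrightarrow> A <#>\<^bsub>G\<^esub> B \<subseteq> A' <#>\<^bsub>G\<^esub> B'"
  unfolding set_mult_def by blast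

lemma r_coset_mono: "A \<subseteq> B \<Longrightarrow> A #>\<^bsub>G\<^esub> x \<subseteq> B #>\<^bsub>G\<^esub> x"
  unfolding r_coset_def by blast

locale descending_normal_series = group H for H :: "('a, 'b) monoid_scheme" (structure) +
  fixes N :: "nat \<Rightarrow> 'a set"
  assumes N_normal: "\<And>i. N i \<lhd> H"
    and N_descending: "\<And>i. N (Suc i) \<subseteq> N i"
begin

sublocale N: normal "N i" H for i
  by (rule N_normal)

sublocale Q: group "H Mod N i" for i
  by (rule N.factorgroup_is_group)

abbreviation \<Gamma> :: "(nat \<Rightarrow> 'a set) monoid" where
  "\<Gamma> \<equiv> inv_limit_quot H N"

lemma group_inv_limit_quot: "group \<Gamma>"
proof (rule groupI)
  fix f g assume f: "f \<in> carrier \<Gamma>" and g: "g \<in> carrier \<Gamma>"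
  show "f \<otimes>\<^bsub>\<Gamma>\<^esub> g \<in> carrier \<Gamma>"
    unfolding carrier_inv_limit_quot mult_inv_limit_quot
  proof (intro conjI allI)
    fix i
    show "f i \<otimes>\<^bsub>H Mod N i\<^esub> g i \<in> carrier (H Mod N i)"
      using f g by (simp add: carrier_inv_limit_quot Q.m_closed del: mult_FactGroup)
    show "f (Suc i) \<otimes>\<^bsub>H Mod N (Suc i)\<^esub> g (Suc i) \<subseteq> f i \<otimes>\<^bsub>H Mod N i\<^esub> g i"
      using f g by (simp add: carrier_inv_limit_quot set_mult_mono)
  qed
next
  show "\<one>\<^bsub>\<Gamma>\<^esub> \<in> carrier \<Gamma>"
    using Q.one_closed by (simp add: carrier_inv_limit_quot one_inv_limit_quot N_descending)
next
  fix f g k assume "f \<in> carrier \<Gamma>" "g \<in> carrier \<Gamma>" "k \<in> carrier \<Gamma>"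
  then show "f \<otimes>\<^bsub>\<Gamma>\<^esub> g \<otimes>\<^bsub>\<Gamma>\<^esub> k = f \<otimes>\<^bsub>\<Gamma>\<^esub> (g \<otimes>\<^bsub>\<Gamma>\<^esub> k)"
    by (auto simp: carrier_inv_limit_quot mult_inv_limit_quot Q.m_assoc
        simp del: mult_FactGroup)
next
  fix f assume "f \<in> carrier \<Gamma>"
  then show "\<one>\<^bsub>\<Gamma>\<^esub> \<otimes>\<^bsub>\<Gamma>\<^esub> f = f"
    by (auto simp: carrier_inv_limit_quot mult_inv_limit_quot one_inv_limit_quot
        Q.l_one simp del: mult_FactGroup one_FactGroup)
next
  fix f assume f: "f \<in> carrier \<Gamma>"
  let ?g = "\<lambda>i. inv\<^bsub>H Mod N i\<^esub> f i"
  have "?g \<in> carrier \<Gamma>"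
    unfolding carrier_inv_limit_quot
  proof (intro conjI allI)
    fix i
    show "?g i \<in> carrier (H Mod N i)"
      using f by (simp add: carrier_inv_limit_quot)
    have "set_inv (f (Suc i)) \<subseteq> set_inv (f i)"
      using f unfolding carrier_inv_limit_quot SET_INV_def by blast
    then show "?g (Suc i) \<subseteq> ?g i"
      using f by (simp add: carrier_inv_limit_quot N.inv_FactGroup)
  qed
  moreover have "?g \<otimes>\<^bsub>\<Gamma>\<^esub> f = \<one>\<^bsub>\<Gamma>\<^esub>"
    using f by (auto simp: carrier_inv_limit_quot mult_inv_limit_quot one_inv_limit_quot
        Q.l_inv simp del: mult_FactGroup one_FactGroup)
  ultimately show "\<exists>g\<in>carrier \<Gamma>. g \<otimes>\<^bsub>\<Gamma>\<^esub> f = \<one>\<^bsub>\<Gamma>\<^esub>"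
    by blast
qed

lemma inv_limit_proj_hom: "group_hom \<Gamma> (H Mod N i) (\<lambda>f. f i)"
  by (auto simp: group_hom_def group_hom_axioms_def hom_def group_inv_limit_quot N.factorgroup_is_group
      carrier_inv_limit_quot mult_inv_limit_quot simp del: mult_FactGroup)

lemma inv_limit_map_hom: "group_hom H \<Gamma> (inv_limit_map H N)"
proof -
  have "inv_limit_map H N \<in> hom H \<Gamma>"
    by (auto simp: hom_def carrier_inv_limit_quot mult_inv_limit_quot carrier_FactGroup
        N.rcos_sum [symmetric] r_coset_mono N_descending)
  then show ?thesis
    by (simp add: group_hom_def group_hom_axioms_def group_inv_limit_quot is_group)
qed

end

locale central_series_quotients = descending_normal_series +
  fixes xs :: "'a list"
  assumes commutators_N: "\<And>i. commutator_subgroup H (carrier H) (N i) = N (Suc i)"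
    and xs_carrier: "set xs \<subseteq> carrier H"
    and xs_distinct: "distinct xs"
    and normally_generated_mod_N: "\<And>i. normally_generated_by (H Mod N i) ((\<lambda>x. N i #> x) ` set xs)"
begin

lemma commutator_lifting_at: "commutator_lifting H (N k) (N (Suc k)) (N (Suc (Suc k))) xs"
  by (unfold_locales) (simp_all add: N_normal commutators_N xs_carrier xs_distinct normally_generated_mod_N)

definition approximates :: "nat \<Rightarrow> ('a \<Rightarrow> 'a) \<Rightarrow> (nat \<Rightarrow> 'a set) \<Rightarrow> bool" where
  "approximates k A \<delta> \<longleftrightarrow>
    (\<forall>x. A x \<in> carrier H) \<and> N (Suc k) #> commutator_prod H (\<lambda>x. x) A xs = \<delta> (Suc k)"

lemma approximation_step:
  assumes \<delta>: "\<delta> \<in> carrier \<Gamma>" and A: "approximates k A \<delta>"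
  shows "\<exists>B. approximates (Suc k) B \<delta> \<and> (\<forall>x. N k #> B x = N k #> A x)"
proof -
  interpret lift: commutator_lifting H "N k" "N (Suc k)" "N (Suc (Suc k))" xs
    by (rule commutator_lifting_at)
  let ?W = "commutator_prod H (\<lambda>x. x) A xs"
  have Ac: "\<And>x. A x \<in> carrier H" and W: "N (Suc k) #> ?W = \<delta> (Suc k)"
    using A by (auto simp: approximates_def)
  have Wc: "?W \<in> carrier H"
    using Ac by (rule lift.commutator_prod_xs_closed)
  have "\<delta> (Suc (Suc k)) \<in> (\<lambda>x. N (Suc (Suc k)) #> x) ` carrier H"
    using \<delta> by (simp add: carrier_inv_limit_quot flip: carrier_FactGroup)
  then obtain d where d: "d \<in> carrier H" "\<delta> (Suc (Suc k)) = N (Suc (Suc k)) #> d"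
    by blast
  have "d \<in> \<delta> (Suc (Suc k))"
    using d rcos_self [OF d(1) N.subgroup_axioms] by simp
  then have "d \<in> \<delta> (Suc k)"
    using \<delta> by (auto simp: carrier_inv_limit_quot)
  then have "N (Suc k) #> d = N (Suc k) #> ?W"
    using \<delta> W by (simp add: carrier_inv_limit_quot N.r_coset_of_mem)
  then have "d \<otimes> inv ?W \<in> N (Suc k)"
    using d(1) Wc by (simp add: N.r_coset_eq_iff)
  then have "inv ?W \<otimes> (d \<otimes> inv ?W) \<otimes> ?W \<in> N (Suc k)"
    using Wc by (rule N.inv_op_closed1 [rotated])
  then have "inv ?W \<otimes> d \<in> N (Suc k)"
    using d(1) Wc by (simp add: m_assoc)
  then obtain b where b: "\<And>x. b x \<in> N k"
    and b_coset: "N (Suc (Suc k)) #> (inv ?W \<otimes> d) = N (Suc (Suc k)) #> commutator_prod H (\<lambda>x. x) b xs"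
    using lift.coset_eq_word_coset by blast
  have bc: "\<And>x. b x \<in> carrier H"
    using b by (rule N.mem_carrier)
  have "N (Suc (Suc k)) #> commutator_prod H (\<lambda>x. x) (\<lambda>x. A x \<otimes> b x) xs
      = (N (Suc (Suc k)) #> ?W) \<otimes>\<^bsub>H Mod N (Suc (Suc k))\<^esub> (N (Suc (Suc k)) #> (inv ?W \<otimes> d))"
    using Ac b by (simp add: lift.coset_commutator_prod_mult b_coset del: mult_FactGroup)
  also have "\<dots> = N (Suc (Suc k)) #> (?W \<otimes> (inv ?W \<otimes> d))"
    using Wc d by (intro lift.quot.hom_mult [symmetric]) auto
  also have "\<dots> = \<delta> (Suc (Suc k))"
    using Wc d by simp
  finally have "approximates (Suc k) (\<lambda>x. A x \<otimes> b x) \<delta>"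
    using Ac bc by (simp add: approximates_def)
  moreover have "N k #> (A x \<otimes> b x) = N k #> A x" for x
    using Ac bc N.inv_op_closed2 [OF Ac b] by (simp add: N.r_coset_eq_iff)
  ultimately show ?thesis
    by blast
qed

lemma approximating_sequence:
  assumes "\<delta> \<in> carrier \<Gamma>" and "\<delta> (Suc 0) = N (Suc 0)"
  obtains A where "\<And>k. approximates k (A k) \<delta>" and "\<And>k x. N k #> A (Suc k) x = N k #> A k x"
proof -
  have "commutator_prod H (\<lambda>x. x) (\<lambda>x. \<one>) xs = \<one>"
    using xs_carrier by (intro commutator_prod_one_right) blast
  then have "approximates 0 (\<lambda>x. \<one>) \<delta>"
    using assms(2) by (simp add: approximates_def N.subset)
  then obtain A where "\<And>k. approximates k (A k) \<delta> \<and> (\<forall>x. N k #> A (Suc k) x = N k #> A k x)"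
    using dependent_nat_choice [of "\<lambda>k A. approximates k A \<delta>" "\<lambda>k A B. \<forall>x. N k #> B x = N k #> A x"]
      approximation_step [OF assms(1)] by metis
  then show ?thesis
    using that by blast
qed

lemma commutator_prod_of_kernel:
  assumes "\<delta> \<in> carrier \<Gamma>" and "\<delta> (Suc 0) = N (Suc 0)"
  obtains c where "\<And>x. c x \<in> carrier \<Gamma>" and "\<delta> = commutator_prod \<Gamma> (inv_limit_map H N) c xs"
proof -
  obtain A where A: "\<And>k. approximates k (A k) \<delta>" and A_coherent: "\<And>k x. N k #> A (Suc k) x = N k #> A k x"
    using approximating_sequence [OF assms] by blast
  have Ac: "\<And>k x. A k x \<in> carrier H"
    using A by (simp add: approximates_def)
  define c where "c x = (\<lambda>i. N i #> A i x)" for x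
  have c: "c x \<in> carrier \<Gamma>" for x
    unfolding carrier_inv_limit_quot
  proof (intro conjI allI)
    fix i
    show "c x i \<in> carrier (H Mod N i)"
      using Ac by (simp add: c_def carrier_FactGroup)
    show "c x (Suc i) \<subseteq> c x i"
      unfolding c_def using r_coset_mono [OF N_descending] A_coherent by metis
  qed
  have "\<delta> i = commutator_prod \<Gamma> (inv_limit_map H N) c xs i" for i
  proof -
    interpret proj: group_hom \<Gamma> "H Mod N i" "\<lambda>f. f i"
      by (rule inv_limit_proj_hom)
    interpret quot: group_hom H "H Mod N i" "\<lambda>g. N i #> g"
      by (rule N.group_hom_r_coset)
    let ?W = "commutator_prod H (\<lambda>x. x) (A i) xs"
    have x: "\<And>x. x \<in> set xs \<Longrightarrow> x \<in> carrier H"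
      using xs_carrier by blast
    have "?W \<in> \<delta> (Suc i)"
      using A [of i] rcos_self [OF _ N.subgroup_axioms] Ac x by (auto simp: approximates_def)
    then have "?W \<in> \<delta> i" and "\<delta> i \<in> carrier (H Mod N i)"
      using assms(1) by (auto simp: carrier_inv_limit_quot)
    then have "N i #> ?W = \<delta> i"
      by (intro N.r_coset_of_mem)
    also have "N i #> ?W = commutator_prod (H Mod N i) (\<lambda>x. N i #> x) (\<lambda>x. c x i) xs"
      using Ac x by (simp add: quot.hom_commutator_prod c_def)
    also have "\<dots> = commutator_prod \<Gamma> (inv_limit_map H N) c xs i"
      using c x inv_limit_map_hom by (simp add: proj.hom_commutator_prod group_hom.hom_closed)
    finally show ?thesis
      by simp
  qed
  then show ?thesis
    using that c by blast
qed

lemma carrier_inv_limit_subset_normal: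
  assumes K: "K \<lhd> \<Gamma>" and xs_K: "inv_limit_map H N ` set xs \<subseteq> K"
  shows "carrier \<Gamma> \<subseteq> K"
proof
  fix \<gamma> assume \<gamma>: "\<gamma> \<in> carrier \<Gamma>"
  interpret K: normal K \<Gamma>
    by (rule K)
  interpret h: group_hom H \<Gamma> "inv_limit_map H N"
    by (rule inv_limit_map_hom)
  interpret proj: group_hom \<Gamma> "H Mod N (Suc 0)" "\<lambda>f. f (Suc 0)"
    by (rule inv_limit_proj_hom)
  let ?T = "{g \<in> carrier H. inv_limit_map H N g \<in> K}"
  have "(\<lambda>x. N (Suc 0) #> x) ` ?T = carrier (H Mod N (Suc 0))"
    using normally_generated_mod_N h.normal_vimage [OF K] xs_K xs_carrier
    by (intro N.normally_generated_FactGroup_image) auto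
  moreover have "\<gamma> (Suc 0) \<in> carrier (H Mod N (Suc 0))"
    using \<gamma> by (rule proj.hom_closed)
  ultimately obtain w where w: "w \<in> carrier H" "inv_limit_map H N w \<in> K" "\<gamma> (Suc 0) = N (Suc 0) #> w"
    by auto
  define \<delta> where "\<delta> = inv\<^bsub>\<Gamma>\<^esub> inv_limit_map H N w \<otimes>\<^bsub>\<Gamma>\<^esub> \<gamma>"
  have \<delta>: "\<delta> \<in> carrier \<Gamma>"
    using w \<gamma> by (simp add: \<delta>_def)
  have "\<delta> (Suc 0) = \<one>\<^bsub>H Mod N (Suc 0)\<^esub>"
    using w \<gamma> by (simp add: \<delta>_def Q.l_inv carrier_FactGroup del: mult_FactGroup one_FactGroup)
  then obtain c where c: "\<And>x. c x \<in> carrier \<Gamma>" and \<delta>_eq: "\<delta> = commutator_prod \<Gamma> (inv_limit_map H N) c xs"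
    using commutator_prod_of_kernel [OF \<delta>] by auto
  have "\<delta> \<in> K"
    unfolding \<delta>_eq using xs_K c
    by (intro group.commutator_prod_in_normal [OF group_inv_limit_quot K]) auto
  moreover have "\<gamma> = inv_limit_map H N w \<otimes>\<^bsub>\<Gamma>\<^esub> \<delta>"
    using w \<gamma> by (simp add: \<delta>_def)
  ultimately show "\<gamma> \<in> K"
    using w(2) by simp
qed

theorem normally_generated_inv_limit: "normally_generated_by \<Gamma> (inv_limit_map H N ` set xs)"
proof (rule group.normally_generated_byI [OF group_inv_limit_quot])
  show "inv_limit_map H N ` set xs \<subseteq> carrier \<Gamma>"
    using xs_carrier group_hom.hom_closed [OF inv_limit_map_hom] by blast
qed (rule carrier_inv_limit_subset_normal)

end

theorem mainTheorem2:
  fixes H :: "('a, 'b) monoid_scheme" and Xs :: "'a set" and N :: "nat \<Rightarrow> 'a set"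
  assumes "group H"
    and "finite Xs" and "Xs \<subseteq> carrier H"
    and "\<And>i. N i \<lhd> H"
    and "\<And>i. N (Suc i) \<subseteq> N i"
    and "\<And>i. commutator_subgroup H (carrier H) (N i) = N (Suc i)"
    and "\<And>i. normally_generated_by (H Mod N i) ((\<lambda>x. N i #>\<^bsub>H\<^esub> x) ` Xs)"
  shows "normally_generated_by (inv_limit_quot H N) (inv_limit_map H N ` Xs)"
proof -
  obtain xs where xs: "set xs = Xs" "distinct xs"
    using finite_distinct_list [OF assms(2)] by blast
  interpret central_series_quotients H N xs
    by (intro central_series_quotients.intro descending_normal_series.intro
        central_series_quotients_axioms.intro descending_normal_series_axioms.intro) (use assms xs in auto)
  show ?thesis
    using normally_generated_inv_limit xs(1) by simp
qed

end
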